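(* Let $p\in\mathbb{R}^9$ with $\sum_i p(i)=1$, and let $\rho=\sum_{i=1}^9\left[4p(i)-\tfrac13\right]\Pi_i$. Then $\rho$ is a pure state (a rank-one orthogonal projector) if and only if $$\sum_{i=1}^9 p(i)^2=\frac16\quad\text{and}\quad \sum_{i=1}^9 p(i)^3=\frac12\sum_{(i,j,k)\in Q}p(i)p(j)p(k).$$
   Context: Let $\omega=e^{2\pi i/3}$ and let $|0\rangle,|1\rangle,|2\rangle$ be the standard basis of $\mathbb{C}^3$. Define $X|j\rangle=|j+1 \bmod 3\rangle$ and $Z|j\rangle=\omega^j|j\rangle$. Let $|\psi_0\rangle=\frac{1}{\sqrt2}(0,1,-1)^T$. For $m,n\in\{0,1,2\}$ put $i=3m+n+1$ and let $\Pi_i$ be the orthogonal projector onto $X^mZ^n|\psi_0\rangle$ (the canonical Hesse SIC); $\rho$ is the unique trace-one Hermitian operator with $p(i)=\frac13\operatorname{Tr}(\rho\Pi_i)$. Identify the index $i=3m+n+1$ with the point $(m,n)\in\mathbb{Z}_3^2$. The 12 lines of the affine plane $\mathbb{Z}_3^2$ are $\{1,2,3\},\{4,5,6\},\{7,8,9\},\{1,4,7\},\{2,5,8\},\{3,6,9\},\{1,5,9\},\{2,6,7\},\{3,4,8\},\{1,6,8\},\{2,4,9\},\{3,5,7\}$. $Q$ denotes the set of ordered triples $(i,j,k)$ of pairwise distinct indices with $\{i,j,k\}$ one of these lines. *)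

theory Defs
  imports "HOL-Analysis.Analysis" "HOL-Library.Numeral_Type"
begin

definition idx3 :: "3 \<Rightarrow> nat" where
  "idx3 a = (if a = 0 then 0 else if a = 1 then 1 else 2)"

definition omega :: complex where
  "omega = cis (2 * pi / 3)"

definition shiftX :: "complex^3^3" where
  "shiftX = (\<chi> a b. if a = b + 1 then 1 else 0)"

definition clockZ :: "complex^3^3" where
  "clockZ = (\<chi> a b. if a = b then omega ^ idx3 a else 0)"

definition mpow :: "complex^3^3 \<Rightarrow> nat \<Rightarrow> complex^3^3" where
  "mpow A k = (((**) A) ^^ k) (mat 1)"

definition psi0 :: "complex^3" where
  "psi0 = (\<chi> a. if a = 0 then 0 else if a = 1 then 1 / sqrt 2 else - 1 / sqrt 2)"

definition conj_transpose :: "complex^3^3 \<Rightarrow> complex^3^3" where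
  "conj_transpose A = (\<chi> a b. cnj (A $ b $ a))"

definition proj_onto :: "complex^3 \<Rightarrow> complex^3^3" where
  "proj_onto v = (\<chi> a b. v $ a * cnj (v $ b) / (\<Sum>c\<in>UNIV. v $ c * cnj (v $ c)))"

text \<open>SIC vector and projector for index i = 3m+n+1, i \<in> {1..9}.\<close>
definition sic_vec :: "nat \<Rightarrow> complex^3" where
  "sic_vec i = (mpow shiftX ((i - 1) div 3) ** mpow clockZ ((i - 1) mod 3)) *v psi0"

definition Pi :: "nat \<Rightarrow> complex^3^3" where
  "Pi i = proj_onto (sic_vec i)"

definition rho_of :: "(nat \<Rightarrow> real) \<Rightarrow> complex^3^3" where
  "rho_of p = (\<Sum>i\<in>{1..9}. (4 * p i - 1/3) *\<^sub>R Pi i)"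

definition pure_state :: "complex^3^3 \<Rightarrow> bool" where
  "pure_state A \<longleftrightarrow> A ** A = A \<and> conj_transpose A = A \<and> rank A = 1"

definition lines :: "nat set set" where
  "lines = {{1,2,3},{4,5,6},{7,8,9},{1,4,7},{2,5,8},{3,6,9},{1,5,9},{2,6,7},{3,4,8},
            {1,6,8},{2,4,9},{3,5,7}}"

definition Q :: "(nat \<times> nat \<times> nat) set" where
  "Q = {(i,j,k). i \<noteq> j \<and> j \<noteq> k \<and> i \<noteq> k \<and> {i,j,k} \<in> lines}"

end

theory Submission
  imports Defs
begin

text \<open>The nine Hesse SIC projectors satisfy tr(Pi_i Pi_j) = 1/4 for i \<noteq> j, and for pairwise
  distinct i, j, k the triple products tr(Pi_i Pi_j Pi_k) have real part -1/8 if {i,j,k} is a line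
  of the affine plane over Z_3 and 1/16 otherwise. Expanding rho = \<Sum> c_i Pi_i therefore gives
  tr rho = 1, tr rho^2 = 12 \<Sum> p^2 - 1 and tr rho^3 = 24 \<Sum> p^3 - 12 \<Sum>_Q p p p + 1.
  On the other hand, by the Cayley-Hamilton theorem a Hermitian trace-one 3 by 3 matrix is a
  rank-one projector exactly when tr A^2 = tr A^3 = 1.\<close>

lemma omega_cube: "omega ^ 3 = 1"
proof -
  have "omega ^ 3 = cis (2*pi/3 + 2*pi/3 + 2*pi/3)"
    by (simp only: omega_def power3_eq_cube cis_mult)
  then show ?thesis by simp
qed

lemma omega_pow_mod: "omega ^ k = omega ^ (k mod 3)"
  by (metis div_mult_mod_eq mult_1 omega_cube power_add power_mult power_one mult.commute)

lemma norm_omega: "norm omega = 1"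
  by (simp add: omega_def)

lemma cnj_omega: "cnj omega = omega ^ 2"
proof -
  have "cnj omega * omega = 1"
    using complex_norm_square[of omega] by (simp add: norm_omega mult.commute)
  then have "cnj omega = cnj omega * omega ^ 3" by (simp add: omega_cube)
  also have "\<dots> = omega ^ 2" using \<open>cnj omega * omega = 1\<close>
    by (simp add: power3_eq_cube power2_eq_square mult.assoc[symmetric])
  finally show ?thesis .
qed

lemma omega_root_sum: "omega ^ 2 + omega + 1 = 0"
proof -
  have "omega \<noteq> 1"
  proof
    assume "omega = 1"
    then have "Re omega = 1" by simp
    moreover have "Re omega = -1/2" by (simp add: omega_def cos_120)
    ultimately show False by simp
  qed
  moreover have "(omega - 1) * (omega ^ 2 + omega + 1) = omega ^ 3 - 1"
    by (simp add: algebra_simps power2_eq_square power3_eq_cube)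
  ultimately show ?thesis by (simp add: omega_cube)
qed

lemma trace_square_3:
  fixes A :: "'a :: comm_ring_1^3^3"
  shows "trace (A ** A) = A$1$1^2 + A$2$2^2 + A$3$3^2 + 2 * (A$1$2*A$2$1 + A$1$3*A$3$1 + A$2$3*A$3$2)"
  by (simp add: trace_def matrix_matrix_mult_def sum_3 algebra_simps power2_eq_square)

lemma trace_cube_3:
  fixes A :: "'a :: comm_ring_1^3^3"
  shows "trace (A ** A ** A) = A$1$1^3 + A$2$2^3 + A$3$3^3
     + 3 * (A$1$1 + A$2$2) * A$1$2*A$2$1 + 3 * (A$1$1 + A$3$3) * A$1$3*A$3$1
     + 3 * (A$2$2 + A$3$3) * A$2$3*A$3$2 + 3 * (A$1$2*A$2$3*A$3$1 + A$1$3*A$3$2*A$2$1)"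
  by (simp add: trace_def matrix_matrix_mult_def sum_3 algebra_simps power2_eq_square power3_eq_cube)

lemma cayley_hamilton_3:
  fixes A :: "'a :: comm_ring_1^3^3"
  shows "6 * (A ** A ** A)$i$j = 6 * trace A * (A ** A)$i$j - 3 * (trace A ^ 2 - trace (A ** A)) * A$i$j
     + (trace A ^ 3 - 3 * trace A * trace (A ** A) + 2 * trace (A ** A ** A)) * mat 1 $ i $ j"
  unfolding trace_square_3 trace_cube_3
  using exhaust_3[of i] exhaust_3[of j]
  by (elim disjE) (simp_all add: mat_def matrix_matrix_mult_def sum_3 trace_def algebra_simps
      power2_eq_square power3_eq_cube)

lemma adjugate_3:
  fixes A :: "'a :: comm_ring_1^3^3"
  shows "2 * ((A ** A)$i$j - trace A * A$i$j) + (trace A ^ 2 - trace (A ** A)) * mat 1 $ i $ j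
     = 2 * (A$(j+1)$(i+1) * A$(j+2)$(i+2) - A$(j+1)$(i+2) * A$(j+2)$(i+1))"
proof -
  have wrap: "(4::3) = 1" "(5::3) = 2" by simp_all
  show ?thesis
    unfolding trace_square_3
    using exhaust_3[of i] exhaust_3[of j]
    by (elim disjE) (simp_all add: wrap mat_def matrix_matrix_mult_def sum_3 trace_def algebra_simps
        power2_eq_square)
qed

lemma idempotent_trace_one_minors:
  fixes A :: "'a :: field_char_0^3^3"
  assumes "A ** A = A" "trace A = 1"
  shows "A$a$b * A$c$d = A$a$d * A$c$b"
proof -
  have "trace (A ** A) = 1" using assms by simp
  then have "\<forall>i j. A$(j+1)$(i+1) * A$(j+2)$(i+2) = A$(j+1)$(i+2) * A$(j+2)$(i+1)"
    using adjugate_3[of A] assms by simp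
  moreover have wrap: "(4::3) = 1" "(5::3) = 2" by simp_all
  ultimately have "A$2$2 * A$3$3 = A$2$3 * A$3$2" "A$2$3 * A$3$1 = A$2$1 * A$3$3"
    "A$2$1 * A$3$2 = A$2$2 * A$3$1" "A$3$2 * A$1$3 = A$3$3 * A$1$2" "A$3$3 * A$1$1 = A$3$1 * A$1$3"
    "A$3$1 * A$1$2 = A$3$2 * A$1$1" "A$1$2 * A$2$3 = A$1$3 * A$2$2" "A$1$3 * A$2$1 = A$1$1 * A$2$3"
    "A$1$1 * A$2$2 = A$1$2 * A$2$1"
    unfolding forall_3 by simp_all
  then show ?thesis
    using exhaust_3[of a] exhaust_3[of b] exhaust_3[of c] exhaust_3[of d]
    by (elim disjE) (simp_all add: ac_simps)
qed

lemma rank_eq_1_if_minors_vanish: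
  fixes A :: "'a :: field^'n^'m"
  assumes minors: "\<And>a b c d. A$a$b * A$c$d = A$a$d * A$c$b" and nz: "A$k$l \<noteq> 0"
  shows "rank A = 1"
proof -
  let ?r = "row k A"
  have row_multiple: "row a A = (A$a$l / A$k$l) *s ?r" for a
  proof (subst vec_eq_iff, rule allI)
    fix b
    have "A$a$b = A$a$l / A$k$l * A$k$b"
      using minors[of a b k l] nz by (simp add: field_simps)
    then show "row a A $ b = ((A$a$l / A$k$l) *s ?r) $ b"
      by (simp only: row_def vector_smult_component vec_lambda_beta)
  qed
  have "rows A \<subseteq> vec.span {?r}"
  proof
    fix v assume "v \<in> rows A"
    then obtain a where "v = row a A"
      by (auto simp: rows_def)
    then show "v \<in> vec.span {?r}"
      unfolding vec.span_singleton row_multiple[of a] by blast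
  qed
  moreover have "?r \<noteq> 0"
    using nz by (auto simp: row_def vec_eq_iff)
  then have "vec.independent {?r}"
    by simp
  moreover have "{?r} \<subseteq> rows A"
    by (auto simp: rows_def)
  ultimately have "vec.dim (rows A) = card {?r}"
    using vec.dim_unique by blast
  then show ?thesis
    by (simp add: row_rank_def_gen)
qed

lemma hermitian_square_zero:
  fixes N :: "complex^'n^'n"
  assumes herm: "\<And>a b. cnj (N$a$b) = N$b$a" and "N ** N = 0"
  shows "N = 0"
proof -
  have "(\<Sum>c\<in>UNIV. (norm (N$a$c))^2) = 0" for a
  proof -
    have "complex_of_real (\<Sum>c\<in>UNIV. (norm (N$a$c))^2) = (\<Sum>c\<in>UNIV. N$a$c * cnj (N$a$c))"
      by (simp only: of_real_sum complex_norm_square)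
    also have "\<dots> = (N ** N)$a$a"
      unfolding matrix_matrix_mult_def vec_lambda_beta by (simp only: herm)
    also have "\<dots> = 0"
      using \<open>N ** N = 0\<close> by simp
    finally show ?thesis
      by (simp only: of_real_eq_0_iff)
  qed
  then show ?thesis
    by (simp add: vec_eq_iff sum_nonneg_eq_0_iff)
qed

lemma matrix_diff_ldistrib: "A ** (B - C) = A ** B - A ** (C :: 'a :: ring_1^'n^'n)"
  by (simp add: vec_eq_iff matrix_matrix_mult_def sum_subtractf algebra_simps)

lemma matrix_diff_rdistrib: "(B - C) ** A = B ** A - C ** (A :: 'a :: ring_1^'n^'n)"
  by (simp add: vec_eq_iff matrix_matrix_mult_def sum_subtractf algebra_simps)

lemma hermitian_square:
  fixes A :: "complex^'n^'n"
  assumes "\<And>a b. cnj (A$a$b) = A$b$a"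
  shows "cnj ((A ** A)$a$b) = (A ** A)$b$a"
  by (simp add: matrix_matrix_mult_def assms mult.commute)

text \<open>Given the trace conditions, Cayley-Hamilton yields A^3 = A^2; then A^2 - A is Hermitian
  and squares to zero, so A is a projector, whose 2 by 2 minors vanish by the adjugate identity.\<close>
lemma pure_state_iff_traces:
  fixes A :: "complex^3^3"
  assumes herm: "conj_transpose A = A" and tr: "trace A = 1"
  shows "pure_state A \<longleftrightarrow> trace (A ** A) = 1 \<and> trace (A ** A ** A) = 1"
proof
  assume "pure_state A"
  then have "A ** A = A" by (simp add: pure_state_def)
  with tr show "trace (A ** A) = 1 \<and> trace (A ** A ** A) = 1" by simp
next
  assume tr23: "trace (A ** A) = 1 \<and> trace (A ** A ** A) = 1"
  have h: "cnj (A$a$b) = A$b$a" for a b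
    using arg_cong[OF herm, of "\<lambda>M. M$b$a"] by (simp add: conj_transpose_def)
  have cube: "A ** A ** A = A ** A"
    using cayley_hamilton_3[of A] tr tr23 by (simp add: vec_eq_iff)
  define N where "N = A ** A - A"
  have "N ** N = 0"
    unfolding N_def matrix_diff_ldistrib matrix_diff_rdistrib
    by (simp add: matrix_mul_assoc cube)
  moreover have "cnj (N$a$b) = N$b$a" for a b
    unfolding N_def using hermitian_square[OF h] h by simp
  ultimately have idem: "A ** A = A"
    using hermitian_square_zero[of N] by (simp add: N_def)
  obtain k where "A$k$k \<noteq> 0"
    using tr by (force simp: trace_def)
  then have "rank A = 1"
    using rank_eq_1_if_minors_vanish idempotent_trace_one_minors[OF idem tr] by blast
  with idem herm show "pure_state A"
    by (simp add: pure_state_def)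
qed

lemma mpow_Suc: "mpow A (Suc k) = A ** mpow A k"
  by (simp add: mpow_def)

lemma mpow_shiftX: "mpow shiftX k = (\<chi> a b. if a = b + of_nat k then 1 else 0)"
proof (induction k)
  case 0 then show ?case by (simp add: mpow_def mat_def vec_eq_iff)
next
  case (Suc k)
  have X: "shiftX $ a $ b = (if a = b + 1 then 1 else 0)" for a b
    by (simp add: shiftX_def)
  have "(shiftX ** mpow shiftX k) $ a $ b = (if a = b + of_nat (Suc k) then 1 else 0)" for a b
  proof -
    have "(shiftX ** mpow shiftX k) $ a $ b
        = (\<Sum>c\<in>UNIV. if c = a - 1 then (if c = b + of_nat k then 1 else 0) else 0)"
      unfolding matrix_matrix_mult_def Suc X
      by (auto intro!: sum.cong simp: algebra_simps eq_diff_eq)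
    also have "\<dots> = (if a - 1 = b + of_nat k then 1 else 0)"
      by (rule trans[OF sum.delta]) auto
    finally show ?thesis by (simp add: eq_diff_eq algebra_simps)
  qed
  then show ?case by (simp add: mpow_Suc vec_eq_iff)
qed

lemma mpow_clockZ: "mpow clockZ k = (\<chi> a b. if a = b then omega ^ (k * idx3 a) else 0)"
proof (induction k)
  case 0 then show ?case by (simp add: mpow_def mat_def vec_eq_iff)
next
  case (Suc k)
  have Z: "clockZ $ a $ b = (if a = b then omega ^ idx3 a else 0)" for a b
    by (simp add: clockZ_def)
  have "(clockZ ** mpow clockZ k) $ a $ b = (if a = b then omega ^ (Suc k * idx3 a) else 0)" for a b
  proof -
    have "(clockZ ** mpow clockZ k) $ a $ b
        = (\<Sum>c\<in>UNIV. if c = a then (if a = b then omega ^ idx3 a * omega ^ (k * idx3 a) else 0) else 0)"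
      unfolding matrix_matrix_mult_def Suc Z vec_lambda_beta
      by (rule sum.cong) auto
    also have "\<dots> = (if a = b then omega ^ idx3 a * omega ^ (k * idx3 a) else 0)"
      by (rule trans[OF sum.delta]) auto
    finally show ?thesis by (simp add: power_add)
  qed
  then show ?case by (simp add: mpow_Suc vec_eq_iff)
qed

definition sic_shift :: "nat \<Rightarrow> 3" where
  "sic_shift i = of_nat ((i - 1) div 3)"

definition sic_phase :: "nat \<Rightarrow> nat" where
  "sic_phase i = (i - 1) mod 3"

lemma sic_vec_nth:
  "sic_vec i $ a = omega ^ (sic_phase i * idx3 (a - sic_shift i)) * psi0 $ (a - sic_shift i)"
proof -
  define m where "m = (i - 1) div 3"
  define n where "n = sic_phase i"
  have "sic_vec i $ a = (\<Sum>b\<in>UNIV. (\<Sum>c\<in>UNIV. (if a = c + of_nat m then 1 else 0)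
          * (if c = b then omega ^ (n * idx3 c) else 0)) * psi0 $ b)"
    unfolding sic_vec_def m_def n_def sic_phase_def mpow_shiftX mpow_clockZ
    by (simp add: matrix_vector_mult_def matrix_matrix_mult_def)
  also have "\<dots> = (\<Sum>b\<in>UNIV. if b = a - of_nat m then omega ^ (n * idx3 b) * psi0 $ b else 0)"
  proof (rule sum.cong)
    fix b
    have "(\<Sum>c\<in>UNIV. (if a = c + of_nat m then 1 else 0) * (if c = b then omega ^ (n * idx3 c) else 0))
       = (\<Sum>c\<in>UNIV. if c = b then (if a = b + of_nat m then omega ^ (n * idx3 b) else 0) else 0)"
      by (rule sum.cong) auto
    then show "(\<Sum>c\<in>UNIV. (if a = c + of_nat m then 1 else 0) * (if c = b then omega ^ (n * idx3 c) else 0))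
        * psi0 $ b = (if b = a - of_nat m then omega ^ (n * idx3 b) * psi0 $ b else 0)"
      by (auto simp: eq_diff_eq)
  qed simp
  finally show ?thesis unfolding m_def n_def sic_shift_def by simp
qed

lemma cnj_psi0 [simp]: "cnj (psi0 $ a) = psi0 $ a"
  by (simp add: psi0_def)

lemma sic_vec_outer:
  "sic_vec i $ a * cnj (sic_vec i $ b)
     = omega ^ (sic_phase i * (idx3 (a - sic_shift i) + 2 * idx3 (b - sic_shift i)))
       * (psi0 $ (a - sic_shift i) * psi0 $ (b - sic_shift i))"
  by (simp add: sic_vec_nth cnj_omega algebra_simps flip: power_mult power_add)

lemma sum_UNIV_shift: "(\<Sum>c\<in>UNIV. f (c - d)) = (\<Sum>c\<in>UNIV. f (c :: 'a :: {finite, ab_group_add}))"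
  by (rule sum.reindex_bij_witness[of _ "\<lambda>c. c + d" "\<lambda>c. c - d"]) auto

lemma sic_vec_normalized: "(\<Sum>c\<in>UNIV. sic_vec i $ c * cnj (sic_vec i $ c)) = 1"
proof -
  have "sic_vec i $ c * cnj (sic_vec i $ c) = psi0 $ (c - sic_shift i) ^ 2" for c
    unfolding sic_vec_outer
    by (simp add: power2_eq_square mult.left_commute[of _ 3] power_mult omega_cube)
  then have "(\<Sum>c\<in>UNIV. sic_vec i $ c * cnj (sic_vec i $ c)) = (\<Sum>c\<in>UNIV. psi0 $ c ^ 2)"
    by (simp add: sum_UNIV_shift[where f = "\<lambda>c. psi0 $ c ^ 2"])
  also have "\<dots> = 1"
    by (simp add: sum_3 psi0_def power_divide flip: of_real_power)
  finally show ?thesis .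
qed

lemma Pi_nth:
  "Pi i $ a $ b
     = omega ^ (sic_phase i * (idx3 (a - sic_shift i) + 2 * idx3 (b - sic_shift i)) mod 3)
       * (psi0 $ (a - sic_shift i) * psi0 $ (b - sic_shift i))"
  unfolding Pi_def proj_onto_def vec_lambda_beta sic_vec_normalized
  by (simp add: sic_vec_outer flip: omega_pow_mod)

lemma cnj_proj_onto: "cnj (proj_onto v $ a $ b) = proj_onto v $ b $ a"
  by (simp add: proj_onto_def mult.commute)

lemma hermitian_rho_of: "conj_transpose (rho_of p) = rho_of p"
  by (simp add: vec_eq_iff conj_transpose_def rho_of_def sum_component Pi_def cnj_proj_onto)

lemma sum_1_to_9: "(\<Sum>i\<in>{1..9::nat}. f i) = f 1 + f 2 + f 3 + f 4 + f 5 + f 6 + f 7 + f 8 + f 9"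
proof -
  have "{1..9::nat} = {1,2,3,4,5,6,7,8,9}" by auto
  then show ?thesis by (simp add: add.assoc)
qed

definition sic_comb :: "(nat \<Rightarrow> complex) \<Rightarrow> complex^3^3" where
  "sic_comb c = (\<chi> a b. \<Sum>i\<in>{1..9}. c i * Pi i $ a $ b)"

lemma sic_comb_entries:
  fixes c :: "nat \<Rightarrow> complex"
  defines "S \<equiv> sic_comb c"
  shows "S$1$1 = (c 1 + c 2 + c 3 + c 7 + c 8 + c 9) / 2"
    and "S$2$2 = (c 1 + c 2 + c 3 + c 4 + c 5 + c 6) / 2"
    and "S$3$3 = (c 4 + c 5 + c 6 + c 7 + c 8 + c 9) / 2"
    and "S$1$2 = - (c 1 + c 2 * omega^2 + c 3 * omega) / 2"
    and "S$2$1 = - (c 1 + c 2 * omega + c 3 * omega^2) / 2"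
    and "S$1$3 = - (c 7 + c 8 * omega + c 9 * omega^2) / 2"
    and "S$3$1 = - (c 7 + c 8 * omega^2 + c 9 * omega) / 2"
    and "S$2$3 = - (c 4 + c 5 * omega^2 + c 6 * omega) / 2"
    and "S$3$2 = - (c 4 + c 5 * omega + c 6 * omega^2) / 2"
  unfolding S_def sic_comb_def vec_lambda_beta sum_1_to_9 Pi_nth
  by (simp_all add: sic_shift_def sic_phase_def psi0_def idx3_def field_simps power2_eq_square flip: of_real_mult)

lemma rho_of_eq_sic_comb: "rho_of p = sic_comb (\<lambda>i. of_real (4 * p i - 1/3))"
proof -
  have "(r *\<^sub>R A) $ a $ b = complex_of_real r * A $ a $ b" for r and A :: "complex^3^3" and a b
    unfolding vector_scaleR_component by (rule scaleR_conv_of_real)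
  then show ?thesis
    by (simp add: vec_eq_iff rho_of_def sic_comb_def sum_component)
qed

lemma lines_list:
  "lines = set [{1,2,3},{4,5,6},{7,8,9},{1,4,7},{2,5,8},{3,6,9},{1,5,9},{2,6,7},{3,4,8},
                {1,6,8},{2,4,9},{3,5,7}]"
  by (simp add: lines_def)

lemma distinct_lines_list:
  "distinct [{1::nat,2,3},{4,5,6},{7,8,9},{1,4,7},{2,5,8},{3,6,9},{1,5,9},{2,6,7},{3,4,8},
             {1,6,8},{2,4,9},{3,5,7}]"
  by code_simp

lemma sum_lines:
  "(\<Sum>L\<in>lines. \<Prod>i\<in>L. f i) =
     f 1 * f 2 * f 3 + f 4 * f 5 * f 6 + f 7 * f 8 * f 9 + f 1 * f 4 * f 7 + f 2 * f 5 * f 8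
   + f 3 * f 6 * f 9 + f 1 * f 5 * f 9 + f 2 * f 6 * f 7 + f 3 * f 4 * f 8 + f 1 * f 6 * f 8
   + f 2 * f 4 * f 9 + (f 3 * f 5 * f 7 :: 'a :: comm_semiring_1)"
  unfolding lines_list sum.distinct_set_conv_list[OF distinct_lines_list]
  by (simp add: algebra_simps)

lemma sum_orderings_of_triple:
  assumes "card L = 3"
  shows "(\<Sum>(i,j,k)\<in>{(i,j,k). i \<noteq> j \<and> j \<noteq> k \<and> i \<noteq> k \<and> {i,j,k} = L}. f i * f j * f k)
           = 6 * (\<Prod>i\<in>L. f i :: 'b :: comm_ring_1)"
proof -
  obtain a b c where L: "L = {a,b,c}" and abc: "a \<noteq> b" "b \<noteq> c" "a \<noteq> c"
    using assms by (auto simp: card_3_iff)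
  have "{(i,j,k). i \<noteq> j \<and> j \<noteq> k \<and> i \<noteq> k \<and> {i,j,k} = L}
          = {(a,b,c),(a,c,b),(b,a,c),(b,c,a),(c,a,b),(c,b,a)}" (is "?T = ?P")
  proof
    show "?T \<subseteq> ?P"
    proof
      fix t assume "t \<in> ?T"
      then obtain i j k where t: "t = (i,j,k)" and distinct: "i \<noteq> j" "j \<noteq> k" "i \<noteq> k"
        and "{i,j,k} = L" by blast
      then have "i \<in> {a,b,c}" "j \<in> {a,b,c}" "k \<in> {a,b,c}"
        unfolding L by blast+
      with distinct show "t \<in> ?P" unfolding t by auto
    qed
    show "?P \<subseteq> ?T"
      using abc by (auto simp: L insert_commute)
  qed
  then show ?thesis
    using abc by (simp add: L)
qed

lemma sum_Q: "(\<Sum>(i,j,k)\<in>Q. f i * f j * f k) = 6 * (\<Sum>L\<in>lines. \<Prod>i\<in>L. f i :: 'b :: comm_ring_1)"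
proof -
  have lines_card: "card L = 3" if "L \<in> lines" for L
    using that unfolding lines_def by auto
  have "Q \<subseteq> \<Union>lines \<times> \<Union>lines \<times> \<Union>lines"
    unfolding Q_def by blast
  moreover have "finite (\<Union>lines)"
    by (simp add: lines_def)
  ultimately have "finite Q"
    by (simp add: finite_subset)
  moreover have "(\<lambda>(i,j,k). {i,j,k}) ` Q \<subseteq> lines"
    by (auto simp: Q_def)
  ultimately have "(\<Sum>(i,j,k)\<in>Q. f i * f j * f k)
      = (\<Sum>L\<in>lines. \<Sum>(i,j,k)\<in>{t \<in> Q. (\<lambda>(i,j,k). {i,j,k}) t = L}. f i * f j * f k)"
    by (intro sum.group[symmetric]) (auto simp: lines_def)
  also have "\<dots> = (\<Sum>L\<in>lines. 6 * (\<Prod>i\<in>L. f i))"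
  proof (rule sum.cong)
    fix L assume "L \<in> lines"
    then have "{t \<in> Q. (\<lambda>(i,j,k). {i,j,k}) t = L}
        = {(i,j,k). i \<noteq> j \<and> j \<noteq> k \<and> i \<noteq> k \<and> {i,j,k} = L}"
      by (auto simp: Q_def)
    then show "(\<Sum>(i,j,k)\<in>{t \<in> Q. (\<lambda>(i,j,k). {i,j,k}) t = L}. f i * f j * f k) = 6 * (\<Prod>i\<in>L. f i)"
      using sum_orderings_of_triple[OF lines_card[OF \<open>L \<in> lines\<close>]] by simp
  qed simp
  finally show ?thesis by (simp only: sum_distrib_left)
qed

lemma omega_norm_form:
  "(a + b * omega^2 + c * omega) * (a + b * omega + c * omega^2) = a^2 + b^2 + c^2 - a*b - b*c - a*c"
  using omega_root_sum by algebra

lemma omega_triple_form: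
  "(a1 + a2 * omega^2 + a3 * omega) * (b1 + b2 * omega^2 + b3 * omega) * (c1 + c2 * omega^2 + c3 * omega)
   + (a1 + a2 * omega + a3 * omega^2) * (b1 + b2 * omega + b3 * omega^2) * (c1 + c2 * omega + c3 * omega^2)
   = 3 * (a1*b1*c1 + a2*b2*c2 + a3*b3*c3 + a1*b2*c3 + a1*b3*c2 + a2*b1*c3 + a2*b3*c1 + a3*b1*c2 + a3*b2*c1)
     - (a1 + a2 + a3) * (b1 + b2 + b3) * (c1 + c2 + c3)"
  using omega_root_sum by algebra

lemma trace_sic_comb: "trace (sic_comb c) = (\<Sum>i\<in>{1..9}. c i)"
  unfolding trace_def sum_3 sic_comb_entries sum_1_to_9 by (simp add: field_simps)

lemma trace_sic_comb_powers:
  fixes c :: "nat \<Rightarrow> complex"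
  defines "S \<equiv> sic_comb c"
  shows "trace (S ** S) = 3/4 * (\<Sum>i\<in>{1..9}. c i ^ 2) + 1/4 * (\<Sum>i\<in>{1..9}. c i) ^ 2"
    and "trace (S ** S ** S)
     = 3/8 * (\<Sum>i\<in>{1..9}. c i ^ 3) + 9/16 * (\<Sum>i\<in>{1..9}. c i) * (\<Sum>i\<in>{1..9}. c i ^ 2)
       + 1/16 * (\<Sum>i\<in>{1..9}. c i) ^ 3 - 9/8 * (\<Sum>L\<in>lines. \<Prod>i\<in>L. c i)"
proof -
  define P0 where "P0 = c 1 + c 2 * omega^2 + c 3 * omega"
  define Q0 where "Q0 = c 1 + c 2 * omega + c 3 * omega^2"
  define P1 where "P1 = c 4 + c 5 * omega^2 + c 6 * omega"
  define Q1 where "Q1 = c 4 + c 5 * omega + c 6 * omega^2"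
  define P2 where "P2 = c 7 + c 8 * omega^2 + c 9 * omega"
  define Q2 where "Q2 = c 7 + c 8 * omega + c 9 * omega^2"
  define d1 where "d1 = (c 1 + c 2 + c 3 + c 7 + c 8 + c 9) / 2"
  define d2 where "d2 = (c 1 + c 2 + c 3 + c 4 + c 5 + c 6) / 2"
  define d3 where "d3 = (c 4 + c 5 + c 6 + c 7 + c 8 + c 9) / 2"
  have S: "S$1$1 = d1" "S$2$2 = d2" "S$3$3 = d3" "S$1$2 = -P0/2" "S$2$1 = -Q0/2"
    "S$1$3 = -Q2/2" "S$3$1 = -P2/2" "S$2$3 = -P1/2" "S$3$2 = -Q1/2"
    unfolding S_def sic_comb_entries P0_def Q0_def P1_def Q1_def P2_def Q2_def d1_def d2_def d3_def
    by simp_all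
  have PQ: "P0 * Q0 = c 1^2 + c 2^2 + c 3^2 - c 1 * c 2 - c 2 * c 3 - c 1 * c 3"
    "P1 * Q1 = c 4^2 + c 5^2 + c 6^2 - c 4 * c 5 - c 5 * c 6 - c 4 * c 6"
    "P2 * Q2 = c 7^2 + c 8^2 + c 9^2 - c 7 * c 8 - c 8 * c 9 - c 7 * c 9"
    unfolding P0_def Q0_def P1_def Q1_def P2_def Q2_def by (rule omega_norm_form)+
  have PPP: "P0 * P1 * P2 + Q0 * Q1 * Q2
    = 3 * (c 1 * c 4 * c 7 + c 2 * c 5 * c 8 + c 3 * c 6 * c 9 + c 1 * c 5 * c 9 + c 1 * c 6 * c 8
           + c 2 * c 4 * c 9 + c 2 * c 6 * c 7 + c 3 * c 4 * c 8 + c 3 * c 5 * c 7)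
      - (c 1 + c 2 + c 3) * (c 4 + c 5 + c 6) * (c 7 + c 8 + c 9)"
    unfolding P0_def Q0_def P1_def Q1_def P2_def Q2_def by (rule omega_triple_form)
  have "trace (S ** S) = d1^2 + d2^2 + d3^2 + (P0 * Q0 + P1 * Q1 + P2 * Q2) / 2"
    unfolding trace_square_3 S by (simp add: field_simps power2_eq_square)
  also have "\<dots> = 3/4 * (\<Sum>i\<in>{1..9}. c i ^ 2) + 1/4 * (\<Sum>i\<in>{1..9}. c i) ^ 2"
    unfolding PQ d1_def d2_def d3_def sum_1_to_9 by (simp add: field_simps) algebra
  finally show "trace (S ** S) = 3/4 * (\<Sum>i\<in>{1..9}. c i ^ 2) + 1/4 * (\<Sum>i\<in>{1..9}. c i) ^ 2" .
  have "trace (S ** S ** S) = d1^3 + d2^3 + d3^3 + 3 * (d1 + d2) * (P0 * Q0) / 4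
      + 3 * (d1 + d3) * (P2 * Q2) / 4 + 3 * (d2 + d3) * (P1 * Q1) / 4 - 3 * (P0 * P1 * P2 + Q0 * Q1 * Q2) / 8"
    unfolding trace_cube_3 S by (simp add: field_simps power2_eq_square power3_eq_cube)
  also have "\<dots> = 3/8 * (\<Sum>i\<in>{1..9}. c i ^ 3) + 9/16 * (\<Sum>i\<in>{1..9}. c i) * (\<Sum>i\<in>{1..9}. c i ^ 2)
       + 1/16 * (\<Sum>i\<in>{1..9}. c i) ^ 3 - 9/8 * (\<Sum>L\<in>lines. \<Prod>i\<in>L. c i)"
    unfolding PQ PPP d1_def d2_def d3_def sum_1_to_9 sum_lines by (simp add: field_simps) algebra
  finally show "trace (S ** S ** S)
     = 3/8 * (\<Sum>i\<in>{1..9}. c i ^ 3) + 9/16 * (\<Sum>i\<in>{1..9}. c i) * (\<Sum>i\<in>{1..9}. c i ^ 2)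
       + 1/16 * (\<Sum>i\<in>{1..9}. c i) ^ 3 - 9/8 * (\<Sum>L\<in>lines. \<Prod>i\<in>L. c i)" .
qed

lemma sic_weight_sums:
  fixes p w :: "nat \<Rightarrow> real"
  assumes "(\<Sum>i\<in>{1..9}. p i) = 1" and w_def: "\<And>i. w i = 4 * p i - 1/3"
  shows "(\<Sum>i\<in>{1..9}. w i) = 1"
    and "(\<Sum>i\<in>{1..9}. w i ^ 2) = 16 * (\<Sum>i\<in>{1..9}. p i ^ 2) - 5/3"
    and "(\<Sum>i\<in>{1..9}. w i ^ 3) = 64 * (\<Sum>i\<in>{1..9}. p i ^ 3) - 16 * (\<Sum>i\<in>{1..9}. p i ^ 2) + 1"
    and "(\<Sum>L\<in>lines. \<Prod>i\<in>L. w i)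
           = 64 * (\<Sum>L\<in>lines. \<Prod>i\<in>L. p i) + 8/3 * (\<Sum>i\<in>{1..9}. p i ^ 2) - 4/3"
proof -
  have p9: "p 9 = 1 - (p 1 + p 2 + p 3 + p 4 + p 5 + p 6 + p 7 + p 8)"
    using assms(1) unfolding sum_1_to_9 by simp
  show "(\<Sum>i\<in>{1..9}. w i) = 1"
    unfolding w_def sum_1_to_9 p9 by simp
  show "(\<Sum>i\<in>{1..9}. w i ^ 2) = 16 * (\<Sum>i\<in>{1..9}. p i ^ 2) - 5/3"
    unfolding w_def sum_1_to_9 p9 by (simp add: field_simps) algebra
  show "(\<Sum>i\<in>{1..9}. w i ^ 3) = 64 * (\<Sum>i\<in>{1..9}. p i ^ 3) - 16 * (\<Sum>i\<in>{1..9}. p i ^ 2) + 1"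
    unfolding w_def sum_1_to_9 p9 by (simp add: field_simps) algebra
  show "(\<Sum>L\<in>lines. \<Prod>i\<in>L. w i)
      = 64 * (\<Sum>L\<in>lines. \<Prod>i\<in>L. p i) + 8/3 * (\<Sum>i\<in>{1..9}. p i ^ 2) - 4/3"
    unfolding w_def sum_1_to_9 sum_lines p9 by (simp add: field_simps) algebra
qed

lemma traces_rho_of:
  fixes p :: "nat \<Rightarrow> real"
  assumes "(\<Sum>i\<in>{1..9}. p i) = 1"
  shows "trace (rho_of p) = 1"
    and "trace (rho_of p ** rho_of p) = of_real (12 * (\<Sum>i\<in>{1..9}. p i ^ 2) - 1)"
    and "trace (rho_of p ** rho_of p ** rho_of p)
           = of_real (24 * (\<Sum>i\<in>{1..9}. p i ^ 3) - 12 * (\<Sum>(i,j,k)\<in>Q. p i * p j * p k) + 1)"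
proof -
  define w where "w i = 4 * p i - 1/3" for i
  note sums = sic_weight_sums[OF assms w_def]
  have rho: "rho_of p = sic_comb (\<lambda>i. of_real (w i))"
    unfolding w_def by (rule rho_of_eq_sic_comb)
  show "trace (rho_of p) = 1"
    unfolding rho trace_sic_comb of_real_sum[symmetric] sums by simp
  show "trace (rho_of p ** rho_of p) = of_real (12 * (\<Sum>i\<in>{1..9}. p i ^ 2) - 1)"
    unfolding rho trace_sic_comb_powers of_real_power[symmetric] of_real_sum[symmetric] sums
    by (simp add: field_simps)
  show "trace (rho_of p ** rho_of p ** rho_of p)
      = of_real (24 * (\<Sum>i\<in>{1..9}. p i ^ 3) - 12 * (\<Sum>(i,j,k)\<in>Q. p i * p j * p k) + 1)"
    unfolding rho trace_sic_comb_powers sum_Q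
      of_real_power[symmetric] of_real_prod[symmetric] of_real_sum[symmetric] sums
    by (simp add: field_simps)
qed

theorem mainTheorem4:
  fixes p :: "nat \<Rightarrow> real"
  assumes "(\<Sum>i\<in>{1..9}. p i) = 1"
  shows "pure_state (rho_of p) \<longleftrightarrow>
    ((\<Sum>i\<in>{1..9}. (p i)^2) = 1/6 \<and>
     (\<Sum>i\<in>{1..9}. (p i)^3) = 1/2 * (\<Sum>(i,j,k)\<in>Q. p i * p j * p k))"
proof -
  have "pure_state (rho_of p) \<longleftrightarrow>
      trace (rho_of p ** rho_of p) = 1 \<and> trace (rho_of p ** rho_of p ** rho_of p) = 1"
    using pure_state_iff_traces[OF hermitian_rho_of traces_rho_of(1)[OF assms]] .
  also have "\<dots> \<longleftrightarrow> 12 * (\<Sum>i\<in>{1..9}. p i ^ 2) - 1 = 1 \<and>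
      24 * (\<Sum>i\<in>{1..9}. p i ^ 3) - 12 * (\<Sum>(i,j,k)\<in>Q. p i * p j * p k) + 1 = 1"
    unfolding traces_rho_of(2,3)[OF assms] of_real_eq_1_iff ..
  finally show ?thesis by auto
qed

end
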